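(* Let $r_{2,4}(n)=\operatorname{CT}_{X_1,\ldots,X_4}\big(\sigma_2(Y_1,\ldots,Y_4)\big)^{n}$ with $Y_j=X_j+X_j^{-1}$. Then $r_{2,4}(n)$ satisfies a linear recurrence of order $5$: there exist polynomials $h_0(n),\ldots,h_5(n)\in\mathbb{Z}[n]$ of degree $6$ such that $\sum_{j=0}^{5}h_j(n)\,r_{2,4}(n+j)=0$ for all $n\ge 0$. Accordingly, $R_{2,4}(z)=\sum_{n\ge0}r_{2,4}(n)z^n$ satisfies a linear differential equation (in $\vartheta=z\frac{d}{dz}$ with polynomial coefficients in $z$) of order $11$ and degree $5$.
   Context: $\sigma_2(y_1,\ldots,y_4)=\sum_{1\le a<b\le4}y_ay_b$; $\operatorname{CT}$ denotes the constant term (coefficient of $X_1^0\cdots X_4^0$) of a Laurent polynomial. A differential equation $\sum_{k=0}^K u_k(z)\vartheta^k F=0$ with $u_k\in\mathbb{Q}[z]$, $u_K\ne0$, has order $K$ and degree equal to the maximal degree of the $u_k$. *)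

theory Defs
  imports "HOL-Computational_Algebra.Computational_Algebra"
begin

text \<open>Exponent vectors (indexed by j = 0..3, i.e. X_1..X_4) of the monomials of
  sigma_2(Y_1,...,Y_4) with Y_j = X_j + X_j^{-1}.  Expanding, sigma_2(Y) is the sum of
  the 24 distinct monomials X_a^{ea} X_b^{eb} (a < b, ea, eb in {-1,1}), each with
  coefficient 1.\<close>
definition sigma2_monomials :: "(nat \<Rightarrow> int) set" where
  "sigma2_monomials =
     {e. \<exists>a b ea eb. a < b \<and> b < 4 \<and> ea \<in> {-1, 1} \<and> eb \<in> {-1, 1} \<and>
          e = (\<lambda>j. if j = a then ea else if j = b then eb else 0)}"

text \<open>Constant term of sigma_2(Y)^n: expanding the n-fold product, it is the number of
  length-n sequences of monomials whose exponent vectors sum to zero.\<close>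
definition r24 :: "nat \<Rightarrow> nat" where
  "r24 n = card {xs. length xs = n \<and> set xs \<subseteq> sigma2_monomials \<and>
                     (\<forall>j. (\<Sum>x\<leftarrow>xs. x j) = 0)}"

definition R24 :: "rat fps" where
  "R24 = Abs_fps (\<lambda>n. of_nat (r24 n))"

definition theta :: "rat fps \<Rightarrow> rat fps" where
  "theta F = fps_X * fps_deriv F"

end

theory Submission
  imports Defs "HOL-Library.Product_Plus"
begin

fun walk_count :: "'a::ab_group_add set \<Rightarrow> nat \<Rightarrow> 'a \<Rightarrow> int" where
  "walk_count S 0 u = (if u = 0 then 1 else 0)"
| "walk_count S (Suc k) u = (\<Sum>s\<in>S. walk_count S k (u - s))"

lemma walk_count_eq_card:
  assumes "finite S"
  shows "walk_count S n u = int (card {xs. length xs = n \<and> set xs \<subseteq> S \<and> sum_list xs = u})"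
proof (induction n arbitrary: u)
  case 0
  have "{xs. length xs = 0 \<and> set xs \<subseteq> S \<and> sum_list xs = u} = (if u = 0 then {[]} else {})"
    by auto
  then show ?case by simp
next
  case (Suc n)
  define L where "L v = {xs. length xs = n \<and> set xs \<subseteq> S \<and> sum_list xs = v}" for v
  have finite_L: "finite (L v)" for v
    using finite_lists_length_eq[OF assms, of n] by (rule rev_finite_subset) (auto simp: L_def)
  have "{xs. length xs = Suc n \<and> set xs \<subseteq> S \<and> sum_list xs = u} = (\<Union>s\<in>S. (#) s ` L (u - s))"
  proof (intro set_eqI iffI)
    fix xs assume "xs \<in> {xs. length xs = Suc n \<and> set xs \<subseteq> S \<and> sum_list xs = u}"
    then obtain s ys where "xs = s # ys" "s \<in> S" "ys \<in> L (u - s)"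
      by (cases xs) (auto simp: L_def algebra_simps)
    then show "xs \<in> (\<Union>s\<in>S. (#) s ` L (u - s))" by blast
  qed (auto simp: L_def)
  then have "card {xs. length xs = Suc n \<and> set xs \<subseteq> S \<and> sum_list xs = u} = (\<Sum>s\<in>S. card ((#) s ` L (u - s)))"
    using assms finite_L by (auto intro!: card_UN_disjoint)
  also have "\<dots> = (\<Sum>s\<in>S. card (L (u - s)))"
    by (simp add: card_image)
  finally show ?case
    by (simp add: Suc.IH L_def)
qed

lemma walk_count_nonzero_induct:
  assumes "walk_count S k u \<noteq> 0"
    and "P 0 0"
    and "\<And>k x s. P k x \<Longrightarrow> s \<in> S \<Longrightarrow> P (Suc k) (x + s)"
  shows "P k u"
  using assms(1)
proof (induction k arbitrary: u)
  case 0
  then show ?case using assms(2) by (simp split: if_splits)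
next
  case (Suc k)
  then obtain s where "s \<in> S" "walk_count S k (u - s) \<noteq> 0"
    by (metis (mono_tags, lifting) sum.neutral walk_count.simps(2))
  with Suc.IH assms(3) show ?case
    by fastforce
qed

lemma walk_count_add:
  assumes "finite A" and support: "\<And>v. walk_count S a v \<noteq> 0 \<Longrightarrow> v \<in> A"
  shows "walk_count S (a + b) x = (\<Sum>v\<in>A. walk_count S a v * walk_count S b (x - v))"
proof (induction b arbitrary: x)
  case 0
  have "(\<Sum>v\<in>A. walk_count S a v * walk_count S 0 (x - v)) = (if x \<in> A then walk_count S a x else 0)"
    using \<open>finite A\<close> by (simp add: if_distrib cong: if_cong)
  also have "\<dots> = walk_count S a x"
    using support by auto
  finally show ?case by simp
next
  case (Suc b)
  have "walk_count S (a + Suc b) x = (\<Sum>s\<in>S. \<Sum>v\<in>A. walk_count S a v * walk_count S b (x - s - v))"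
    by (simp add: Suc.IH)
  also have "\<dots> = (\<Sum>v\<in>A. walk_count S a v * (\<Sum>s\<in>S. walk_count S b (x - v - s)))"
    by (subst sum.swap) (simp add: sum_distrib_left algebra_simps)
  finally show ?case by simp
qed

lemma walk_count_automorphism:
  assumes hom: "\<And>x y. g (x - y) = g x - g y" and "inj g" and "g ` S = S"
  shows "walk_count S k (g u) = walk_count S k u"
proof (induction k arbitrary: u)
  case 0
  have "g 0 = 0" using hom[of 0 0] by simp
  with \<open>inj g\<close> have "g u = 0 \<longleftrightarrow> u = 0" by (metis injD)
  then show ?case by simp
next
  case (Suc k)
  have "walk_count S (Suc k) (g u) = (\<Sum>s\<in>g ` S. walk_count S k (g u - s))"
    using \<open>g ` S = S\<close> by simp
  also have "\<dots> = (\<Sum>s\<in>S. walk_count S k (g (u - s)))"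
    using \<open>inj g\<close> by (simp add: sum.reindex inj_on_subset hom)
  finally show ?case by (simp add: Suc.IH)
qed

text \<open>For an additive coordinate \<open>\<phi>\<close>, this is the coefficientwise form of
  \<open>\<theta>(P\<^sup>m\<^sup>+\<^sup>1) = (m + 1) P\<^sup>m \<theta>(P)\<close>, where \<open>P = \<Sum>s\<in>S. X\<^sup>s\<close> and \<open>\<theta>\<close> is the Euler operator
  acting on \<open>X\<^sup>u\<close> by multiplication with \<open>\<phi> u\<close>.\<close>
lemma additive_mult_walk_count:
  assumes additive: "\<And>x y. \<phi> (x - y) = \<phi> x - \<phi> y"
  shows "\<phi> x * walk_count S (Suc m) x = int (Suc m) * (\<Sum>s\<in>S. \<phi> s * walk_count S m (x - s))"
proof (induction m arbitrary: x)
  case 0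
  show ?case by (simp add: sum_distrib_left) (rule sum.cong, auto)
next
  case (Suc m)
  let ?T = "\<Sum>s\<in>S. \<phi> s * walk_count S (Suc m) (x - s)"
  have "\<phi> x * walk_count S (Suc (Suc m)) x = (\<Sum>s\<in>S. (\<phi> (x - s) + \<phi> s) * walk_count S (Suc m) (x - s))"
    by (simp add: additive sum_distrib_left)
  also have "\<dots> = (\<Sum>s\<in>S. \<phi> (x - s) * walk_count S (Suc m) (x - s)) + ?T"
    by (simp add: distrib_right sum.distrib)
  also have "(\<Sum>s\<in>S. \<phi> (x - s) * walk_count S (Suc m) (x - s))
      = int (Suc m) * (\<Sum>s\<in>S. \<Sum>s'\<in>S. \<phi> s' * walk_count S m (x - s - s'))"
    by (simp only: Suc.IH sum_distrib_left)
  also have "\<dots> = int (Suc m) * ?T"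
    by (subst sum.swap) (simp add: sum_distrib_left diff_diff_eq add.commute)
  finally show ?case by (simp add: algebra_simps)
qed

text \<open>The coefficient of \<open>X\<^sup>u\<close> in \<open>\<Sum>i\<in>I. n \<theta>\<^sub>i(P) R\<^sub>i + P \<theta>\<^sub>i(R\<^sub>i)\<close>, where
  \<open>P = \<Sum>s\<in>S. X\<^sup>s\<close>, \<open>R\<^sub>i = \<Sum>t. Q i t X\<^sup>t\<close> and \<open>\<theta>\<^sub>i\<close> multiplies \<open>X\<^sup>u\<close> by \<open>\<phi> i u\<close>.
  Multiplied by \<open>P\<^sup>n\<^sup>-\<^sup>1\<close> this is \<open>\<Sum>i\<in>I. \<theta>\<^sub>i(P\<^sup>n R\<^sub>i)\<close>, whose constant term vanishes.\<close>
definition euler_certificate ::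
    "'a::ab_group_add set \<Rightarrow> ('i \<Rightarrow> 'a \<Rightarrow> int) \<Rightarrow> 'i set \<Rightarrow> ('i \<Rightarrow> 'a \<Rightarrow> int) \<Rightarrow> int \<Rightarrow> 'a \<Rightarrow> int"
  where "euler_certificate S \<phi> I Q n u = (\<Sum>s\<in>S. \<Sum>i\<in>I. (n * \<phi> i s + \<phi> i (u - s)) * Q i (u - s))"

lemma sum_shift_window:
  fixes F :: "'a::ab_group_add \<Rightarrow> 'b::comm_semiring_0"
  assumes "finite A" and "\<And>t. F t \<noteq> 0 \<Longrightarrow> t \<in> B" and "\<And>t. t \<in> B \<Longrightarrow> t + s \<in> A"
  shows "(\<Sum>u\<in>A. F (u - s) * H u) = (\<Sum>t\<in>B. F t * H (t + s))"
proof -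
  have "(\<Sum>t\<in>B. F t * H (t + s)) = (\<Sum>u\<in>(\<lambda>t. t + s) ` B. F (u - s) * H u)"
    by (simp add: sum.reindex inj_on_def)
  also have "\<dots> = (\<Sum>u\<in>A. F (u - s) * H u)"
  proof (rule sum.mono_neutral_left)
    show "\<forall>u\<in>A - (\<lambda>t. t + s) ` B. F (u - s) * H u = 0"
      using assms(2) by (metis DiffE diff_add_cancel image_eqI mult_zero_left)
  qed (use assms in auto)
  finally show ?thesis ..
qed

lemma euler_certificate_walk_sum_eq_0:
  assumes additive: "\<And>i x y. \<phi> i (x - y) = \<phi> i x - \<phi> i y"
    and "finite A" and "finite B"
    and Q_support: "\<And>i t. Q i t \<noteq> 0 \<Longrightarrow> t \<in> B"
    and window: "\<And>t s. t \<in> B \<Longrightarrow> s \<in> S \<Longrightarrow> t + s \<in> A"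
  shows "(\<Sum>u\<in>A. euler_certificate S \<phi> I Q (int (Suc m)) u * walk_count S m (- u)) = 0"
proof -
  let ?n = "int (Suc m)"
  have "(\<Sum>u\<in>A. euler_certificate S \<phi> I Q ?n u * walk_count S m (- u))
      = (\<Sum>s\<in>S. \<Sum>i\<in>I. \<Sum>u\<in>A. ((?n * \<phi> i s + \<phi> i (u - s)) * Q i (u - s)) * walk_count S m (- u))"
    unfolding euler_certificate_def sum_distrib_right
    by (subst sum.swap, subst (2) sum.swap) (rule refl)
  also have "\<dots> = (\<Sum>s\<in>S. \<Sum>i\<in>I. \<Sum>t\<in>B. ((?n * \<phi> i s + \<phi> i t) * Q i t) * walk_count S m (- (t + s)))"
    using \<open>finite A\<close> Q_support window by (intro sum.cong refl sum_shift_window) auto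
  also have "\<dots> = (\<Sum>i\<in>I. \<Sum>t\<in>B. Q i t * (\<Sum>s\<in>S. (?n * \<phi> i s + \<phi> i t) * walk_count S m (- t - s)))"
    by (subst sum.swap, rule sum.cong[OF refl], subst sum.swap) (simp add: sum_distrib_left algebra_simps)
  also have "\<dots> = 0"
  proof (intro sum.neutral ballI)
    fix i t
    have "\<phi> i (- t) = - \<phi> i t"
      using additive[of i 0 t] additive[of i 0 0] by simp
    then have "- \<phi> i t * walk_count S (Suc m) (- t) = ?n * (\<Sum>s\<in>S. \<phi> i s * walk_count S m (- t - s))"
      using additive_mult_walk_count[of "\<phi> i" "- t" S m] additive by (simp del: walk_count.simps)
    moreover have "(\<Sum>s\<in>S. (?n * \<phi> i s + \<phi> i t) * walk_count S m (- t - s))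
        = ?n * (\<Sum>s\<in>S. \<phi> i s * walk_count S m (- t - s)) + \<phi> i t * walk_count S (Suc m) (- t)"
      by (simp add: algebra_simps sum.distrib sum_distrib_left)
    ultimately have "(\<Sum>s\<in>S. (?n * \<phi> i s + \<phi> i t) * walk_count S m (- t - s)) = 0"
      by (simp del: walk_count.simps)
    then show "Q i t * (\<Sum>s\<in>S. (?n * \<phi> i s + \<phi> i t) * walk_count S m (- t - s)) = 0"
      by simp
  qed
  finally show ?thesis .
qed

lemma walk_recurrence_of_euler_certificate:
  assumes additive: "\<And>i x y. \<phi> i (x - y) = \<phi> i x - \<phi> i y"
    and "finite A" and "finite B"
    and walk_support: "\<And>j v. j \<le> J \<Longrightarrow> walk_count S (Suc j) v \<noteq> 0 \<Longrightarrow> v \<in> A"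
    and Q_support: "\<And>i t. Q i t \<noteq> 0 \<Longrightarrow> t \<in> B"
    and window: "\<And>t s. t \<in> B \<Longrightarrow> s \<in> S \<Longrightarrow> t + s \<in> A"
    and certificate: "\<And>u. (\<Sum>j\<le>J. c j * walk_count S (Suc j) u) = euler_certificate S \<phi> I Q (int n) u"
    and "n > 0"
  shows "(\<Sum>j\<le>J. c j * walk_count S (n + j) 0) = 0"
proof -
  obtain m where n: "n = Suc m" using \<open>n > 0\<close> gr0_implies_Suc by blast
  have "walk_count S (n + j) 0 = (\<Sum>u\<in>A. walk_count S (Suc j) u * walk_count S m (- u))" if "j \<le> J" for j
    using walk_count_add[where S=S and a="Suc j" and b=m and x=0, OF \<open>finite A\<close> walk_support[OF that]]
    by (simp add: n add.commute del: walk_count.simps)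
  then have "(\<Sum>j\<le>J. c j * walk_count S (n + j) 0)
      = (\<Sum>j\<le>J. c j * (\<Sum>u\<in>A. walk_count S (Suc j) u * walk_count S m (- u)))"
    by simp
  also have "\<dots> = (\<Sum>u\<in>A. (\<Sum>j\<le>J. c j * walk_count S (Suc j) u) * walk_count S m (- u))"
    by (simp add: sum_distrib_left sum_distrib_right mult.assoc sum.swap[of _ "{..J}"] del: walk_count.simps)
  also have "\<dots> = 0"
    unfolding certificate n
    using euler_certificate_walk_sum_eq_0[OF additive \<open>finite A\<close> \<open>finite B\<close> Q_support window] .
  finally show ?thesis .
qed

lemma theta_power_nth: "(theta ^^ k) F $ m = of_nat m ^ k * F $ m"
  by (induction k) (cases m; simp add: theta_def)+

lemma sum_fps_of_poly_theta_nth: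
  "(\<Sum>k\<le>K. fps_of_poly (u k) * (theta ^^ k) (Abs_fps a)) $ m
     = (\<Sum>i\<le>m. (\<Sum>k\<le>K. coeff (u k) i * of_nat (m - i) ^ k) * a (m - i))"
  by (simp add: fps_sum_nth fps_mult_nth theta_power_nth atLeast0AtMost sum_distrib_right
      sum.swap[of _ "{..K}"] mult.assoc)

lemma poly_eq_sum_coeff:
  fixes p :: "'a::comm_semiring_1 poly"
  assumes "degree p \<le> K"
  shows "poly p x = (\<Sum>k\<le>K. coeff p k * x ^ k)"
proof -
  have "poly p x = (\<Sum>k\<le>degree p. coeff p k * x ^ k)" by (simp add: poly_altdef)
  also have "\<dots> = (\<Sum>k\<le>K. coeff p k * x ^ k)"
    using assms by (intro sum.mono_neutral_left) (auto simp: coeff_eq_0)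
  finally show ?thesis .
qed

text \<open>Multiplying a recurrence \<open>\<Sum>j\<le>J. h\<^sub>j(n) a(n + j) = 0\<close> by \<open>(n + 1) \<cdots> (n + J)\<close> makes it valid
  also for the shifted indices \<open>n - J, \<dots>, n - 1\<close> down to \<open>n = 0\<close>, so that it becomes the
  coefficientwise form of an equation in \<open>\<theta>\<close>.\<close>
lemma theta_equation_of_recurrence:
  fixes h :: "nat \<Rightarrow> rat poly" and a :: "nat \<Rightarrow> rat"
  assumes degree_h: "\<And>j. j \<le> J \<Longrightarrow> degree (h j) \<le> D"
    and "degree (h 0) = D" and "h 0 \<noteq> 0"
    and recurrence: "\<And>n. (\<Sum>j\<le>J. poly (h j) (of_nat n) * a (n + j)) = 0"
  obtains u where "\<And>k. degree (u k) \<le> J" and "degree (u (J + D)) = J" and "u (J + D) \<noteq> 0"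
    and "(\<Sum>k\<le>J + D. fps_of_poly (u k) * (theta ^^ k) (Abs_fps a)) = 0"
proof -
  define g where "g = (\<Prod>k=1..J. [:of_nat k, 1:] :: rat poly)"
  define P where "P i = pcompose (g * h (J - i)) [:of_nat i - of_nat J, 1:]" for i
  define u where "u k = (\<Sum>i\<le>J. monom (coeff (P i) k) i)" for k
  have poly_g: "poly g y = (\<Prod>k=1..J. y + of_nat k)" for y
    by (simp add: g_def poly_prod add.commute)
  have degree_g: "degree g = J"
    by (simp add: g_def degree_prod_eq_sum_degree)
  have lead_g: "lead_coeff g = 1"
    unfolding g_def lead_coeff_prod by simp
  have poly_P: "poly (P i) x = poly g (x + of_nat i - of_nat J) * poly (h (J - i)) (x + of_nat i - of_nat J)" for i x
    by (simp add: P_def poly_pcompose algebra_simps)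
  have degree_P: "degree (P i) \<le> J + D" if "i \<le> J" for i
    using degree_mult_le[of g "h (J - i)"] degree_h[of "J - i"]
    by (simp add: P_def degree_pcompose degree_g)
  have coeff_u: "coeff (u k) i = (if i \<le> J then coeff (P i) k else 0)" for k i
    by (simp add: u_def coeff_sum coeff_monom)
  have degree_u: "degree (u k) \<le> J" for k
    by (rule degree_le) (simp add: coeff_u)
  have "coeff (u (J + D)) J = lead_coeff (h 0)"
    using coeff_mult_degree_sum[of g "h 0"] \<open>degree (h 0) = D\<close>
    using lead_g by (simp add: coeff_u P_def degree_g)
  then have top: "coeff (u (J + D)) J \<noteq> 0"
    using \<open>h 0 \<noteq> 0\<close> by simp
  have "(\<Sum>k\<le>J + D. fps_of_poly (u k) * (theta ^^ k) (Abs_fps a)) $ m = 0" for m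
  proof -
    have "(\<Sum>k\<le>J + D. coeff (u k) i * of_nat (m - i) ^ k)
        = (if i \<le> J then poly g (of_nat m - of_nat J) * poly (h (J - i)) (of_nat m - of_nat J) else 0)"
      if "i \<le> m" for i
      using that poly_eq_sum_coeff[OF degree_P, of i "of_nat (m - i)"]
      by (simp add: coeff_u poly_P of_nat_diff)
    then have "(\<Sum>k\<le>J + D. fps_of_poly (u k) * (theta ^^ k) (Abs_fps a)) $ m
        = (\<Sum>i\<le>m. (if i \<le> J then poly g (of_nat m - of_nat J) * poly (h (J - i)) (of_nat m - of_nat J)
            else 0) * a (m - i))"
      unfolding sum_fps_of_poly_theta_nth by (intro sum.cong) auto
    also have "\<dots> = poly g (of_nat m - of_nat J)
        * (\<Sum>i\<in>{..m} \<inter> {..J}. poly (h (J - i)) (of_nat m - of_nat J) * a (m - i))"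
      by (subst sum.inter_restrict) (auto simp: sum_distrib_left mult.assoc intro!: sum.cong)
    also have "\<dots> = 0"
    proof (cases "m < J")
      case True
      then have "poly g (of_nat m - of_nat J) = 0"
        by (auto simp: poly_g prod_zero_iff intro!: bexI[of _ "J - m"])
      then show ?thesis by simp
    next
      case False
      then obtain n where m: "m = n + J" by (metis le_add_diff_inverse2 not_less)
      have "(\<Sum>i\<in>{..m} \<inter> {..J}. poly (h (J - i)) (of_nat m - of_nat J) * a (m - i))
          = (\<Sum>j\<le>J. poly (h j) (of_nat n) * a (n + j))"
        by (rule sum.reindex_bij_witness[where i="\<lambda>j. J - j" and j="\<lambda>i. J - i"]) (auto simp: m)
      then show ?thesis by (simp add: recurrence)
    qed
    finally show ?thesis .
  qed
  then have "(\<Sum>k\<le>J + D. fps_of_poly (u k) * (theta ^^ k) (Abs_fps a)) = 0"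
    by (simp add: fps_eq_iff del: fps_sum_nth)
  moreover from top have "u (J + D) \<noteq> 0" by auto
  moreover from top have "degree (u (J + D)) = J"
    using degree_u le_degree le_antisym by blast
  ultimately show ?thesis using that degree_u by blast
qed


lemma card_lists_transfer:
  assumes "inj_on f S" and "\<And>xs. set xs \<subseteq> S \<Longrightarrow> P xs \<longleftrightarrow> Q (map f xs)"
  shows "card {xs. length xs = n \<and> set xs \<subseteq> S \<and> P xs} = card {ys. length ys = n \<and> set ys \<subseteq> f ` S \<and> Q ys}"
proof -
  let ?A = "{xs. length xs = n \<and> set xs \<subseteq> S \<and> P xs}"
  have "{ys. length ys = n \<and> set ys \<subseteq> f ` S \<and> Q ys} = map f ` ?A"
  proof (intro set_eqI iffI)
    fix ys assume ys: "ys \<in> {ys. length ys = n \<and> set ys \<subseteq> f ` S \<and> Q ys}"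
    then have "ys \<in> lists (f ` S)" by auto
    then obtain xs where "xs \<in> lists S" "ys = map f xs" by (auto simp: lists_image)
    with ys assms(2) show "ys \<in> map f ` ?A" by auto
  qed (use assms(2) in force)
  moreover have "inj_on (map f) ?A"
    by (rule inj_on_mapI, rule inj_on_subset[OF assms(1)]) auto
  ultimately show ?thesis by (simp add: card_image)
qed

lemma four_cases: "(j::nat) < 4 \<longleftrightarrow> j = 0 \<or> j = 1 \<or> j = 2 \<or> j = 3"
  by auto

type_synonym vec4 = "int \<times> int \<times> int \<times> int"

definition sigma2_step_list :: "vec4 list" where
  "sigma2_step_list = [(-1, -1, 0, 0), (-1, 1, 0, 0), (1, -1, 0, 0), (1, 1, 0, 0), (-1, 0, -1, 0), (-1, 0, 1, 0), (1, 0, -1, 0), (1, 0, 1, 0), (-1, 0, 0, -1), (-1, 0, 0, 1), (1, 0, 0, -1), (1, 0, 0, 1), (0, -1, -1, 0), (0, -1, 1, 0), (0, 1, -1, 0), (0, 1, 1, 0), (0, -1, 0, -1), (0, -1, 0, 1), (0, 1, 0, -1), (0, 1, 0, 1), (0, 0, -1, -1), (0, 0, -1, 1), (0, 0, 1, -1), (0, 0, 1, 1)]"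

definition sigma2_steps :: "vec4 set" where
  "sigma2_steps = set sigma2_step_list"

lemma sum_sigma2_steps: "(\<Sum>s\<in>sigma2_steps. f s) = (\<Sum>s\<leftarrow>sigma2_step_list. f s)"
  by (simp add: sigma2_steps_def sum.distinct_set_conv_list sigma2_step_list_def)

definition exponent_vector :: "(nat \<Rightarrow> int) \<Rightarrow> vec4" where
  "exponent_vector e = (e 0, e 1, e 2, e 3)"

lemma sigma2_monomials_eq_image:
  "sigma2_monomials = (\<lambda>(a, b, ea, eb) j. if j = a then ea else if j = b then eb else 0) `
     set [(a, b, ea, eb). (a, b) \<leftarrow> [(0, 1), (0, 2), (0, 3), (1, 2), (1, 3), (2, 3)], ea \<leftarrow> [-1, 1], eb \<leftarrow> [-1, 1]]"
  (is "_ = _ ` set ?indices")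
proof -
  let ?I = "{(a, b, ea, eb). a < b \<and> b < (4::nat) \<and> ea \<in> {-1, 1::int} \<and> eb \<in> {-1, 1::int}}"
  have "list_all (\<lambda>x. x \<in> ?I) ?indices"
    by simp
  then have "set ?indices \<subseteq> ?I"
    by (simp only: list_all_iff subset_code(1))
  moreover have "?I \<subseteq> set ?indices"
  proof
    fix x assume "x \<in> ?I"
    then obtain a b ea eb where x: "x = (a, b, ea, eb)" and "a < b" "b < 4" and ea: "ea = -1 \<or> ea = 1" and eb: "eb = -1 \<or> eb = 1"
      by blast
    then have "a = 0 \<and> b = 1 \<or> a = 0 \<and> b = 2 \<or> a = 0 \<and> b = 3 \<or> a = 1 \<and> b = 2 \<or> a = 1 \<and> b = 3 \<or> a = 2 \<and> b = 3"
      by (auto simp: less_Suc_eq numeral_eq_Suc)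
    with ea eb show "x \<in> set ?indices"
      unfolding x by (elim disjE conjE; simp)
  qed
  ultimately have indices: "set ?indices = ?I" by (rule antisym)
  show ?thesis
    unfolding sigma2_monomials_def indices by (simp add: image_def)
qed

lemma exponent_vector_sigma2_monomials: "exponent_vector ` sigma2_monomials = sigma2_steps"
  by (simp add: sigma2_monomials_eq_image exponent_vector_def sigma2_steps_def sigma2_step_list_def)

lemma sigma2_monomial_vanishes: "e \<in> sigma2_monomials \<Longrightarrow> 4 \<le> j \<Longrightarrow> e j = 0"
  unfolding sigma2_monomials_def by auto

lemma inj_on_exponent_vector: "inj_on exponent_vector sigma2_monomials"
proof (rule inj_onI, rule ext)
  fix e e' j assume "e \<in> sigma2_monomials" "e' \<in> sigma2_monomials" and eq: "exponent_vector e = exponent_vector e'"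
  show "e j = e' j"
  proof (cases "j < 4")
    case True
    then have "j = 0 \<or> j = 1 \<or> j = 2 \<or> j = 3" by auto
    with eq show ?thesis by (auto simp: exponent_vector_def)
  next
    case False
    with \<open>e \<in> sigma2_monomials\<close> \<open>e' \<in> sigma2_monomials\<close> show ?thesis
      by (simp add: sigma2_monomial_vanishes)
  qed
qed

lemma r24_eq_walk_count: "int (r24 n) = walk_count sigma2_steps n 0"
proof -
  have "(\<forall>j. (\<Sum>x\<leftarrow>xs. x j) = 0) \<longleftrightarrow> sum_list (map exponent_vector xs) = 0"
    if "set xs \<subseteq> sigma2_monomials" for xs
  proof -
    have high: "(\<Sum>x\<leftarrow>xs. x j) = 0" if "4 \<le> j" for j
      using \<open>set xs \<subseteq> sigma2_monomials\<close> by (induction xs) (simp_all add: sigma2_monomial_vanishes that)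
    have "(\<forall>j. (\<Sum>x\<leftarrow>xs. x j) = 0) \<longleftrightarrow> (\<forall>j<4. (\<Sum>x\<leftarrow>xs. x j) = 0)"
      using high not_le by blast
    also have "\<dots> \<longleftrightarrow> exponent_vector (\<lambda>j. \<Sum>x\<leftarrow>xs. x j) = 0"
      unfolding four_cases by (auto simp: exponent_vector_def zero_prod_def)
    also have "exponent_vector (\<lambda>j. \<Sum>x\<leftarrow>xs. x j) = sum_list (map exponent_vector xs)"
      by (induction xs) (simp_all add: exponent_vector_def zero_prod_def flip: add_Pair)
    finally show ?thesis .
  qed
  then have "r24 n = card {ys. length ys = n \<and> set ys \<subseteq> sigma2_steps \<and> sum_list ys = 0}"
    unfolding r24_def exponent_vector_sigma2_monomials[symmetric]
    by (intro card_lists_transfer inj_on_exponent_vector)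
  then show ?thesis
    by (simp add: walk_count_eq_card sigma2_steps_def)
qed

fun coord :: "nat \<Rightarrow> vec4 \<Rightarrow> int" where
  "coord i (a, b, c, d) = (if i = 0 then a else if i = 1 then b else if i = 2 then c else d)"

lemma coord_diff: "coord i (x - y) = coord i x - coord i y"
  by (cases x; cases y) simp

fun norm1 :: "vec4 \<Rightarrow> int" where
  "norm1 (a, b, c, d) = \<bar>a\<bar> + \<bar>b\<bar> + \<bar>c\<bar> + \<bar>d\<bar>"

fun coord_sum :: "vec4 \<Rightarrow> int" where
  "coord_sum (a, b, c, d) = a + b + c + d"

lemma coord_sum_add: "coord_sum (x + y) = coord_sum x + coord_sum y"
  by (cases x; cases y) simp

lemma norm1_add_sigma2_step: "s \<in> sigma2_steps \<Longrightarrow> norm1 (x + s) \<le> norm1 x + 2"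
  by (cases x) (auto simp: sigma2_steps_def sigma2_step_list_def)

lemma even_coord_sum_sigma2_step: "s \<in> sigma2_steps \<Longrightarrow> even (coord_sum s)"
  by (auto simp: sigma2_steps_def sigma2_step_list_def)

lemma walk_count_sigma2_support:
  assumes "walk_count sigma2_steps k u \<noteq> 0"
  shows "norm1 u \<le> 2 * int k \<and> even (coord_sum u)"
  using assms
proof (rule walk_count_nonzero_induct[where P = "\<lambda>k u. norm1 u \<le> 2 * int k \<and> even (coord_sum u)"])
  fix k x s assume "norm1 x \<le> 2 * int k \<and> even (coord_sum x)" and "s \<in> sigma2_steps"
  then show "norm1 (x + s) \<le> 2 * int (Suc k) \<and> even (coord_sum (x + s))"
    using norm1_add_sigma2_step[of s x] even_coord_sum_sigma2_step[of s] by (auto simp: coord_sum_add)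
qed (simp add: zero_prod_def)

definition box :: "int \<Rightarrow> vec4 set" where
  "box r = {-r..r} \<times> {-r..r} \<times> {-r..r} \<times> {-r..r}"

lemma finite_box: "finite (box r)"
  by (simp add: box_def)

lemma norm1_le_imp_in_box: "norm1 u \<le> r \<Longrightarrow> u \<in> box r"
  by (cases u) (auto simp: box_def)

lemma box_add_sigma2_step: "t \<in> box r \<Longrightarrow> s \<in> sigma2_steps \<Longrightarrow> r < r' \<Longrightarrow> t + s \<in> box r'"
  by (cases t) (auto simp: box_def sigma2_steps_def sigma2_step_list_def)

definition symmetry_generators :: "(vec4 \<Rightarrow> vec4) set" where
  "symmetry_generators =
     {\<lambda>(a, b, c, d). (b, a, c, d), \<lambda>(a, b, c, d). (c, b, a, d), \<lambda>(a, b, c, d). (a, c, b, d),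
      \<lambda>(a, b, c, d). (a, d, c, b), \<lambda>(a, b, c, d). (a, b, d, c),
      \<lambda>(a, b, c, d). (- a, b, c, d), \<lambda>(a, b, c, d). (a, - b, c, d),
      \<lambda>(a, b, c, d). (a, b, - c, d), \<lambda>(a, b, c, d). (a, b, c, - d)}"

lemma symmetry_generator_diff: "g \<in> symmetry_generators \<Longrightarrow> g (x - y) = g x - g y"
  by (cases x; cases y) (auto simp: symmetry_generators_def)

lemma inj_symmetry_generator: "g \<in> symmetry_generators \<Longrightarrow> inj g"
  by (rule injI) (auto simp: symmetry_generators_def)

lemma symmetry_generator_sigma2_steps:
  assumes "g \<in> symmetry_generators"
  shows "g ` sigma2_steps = sigma2_steps"
proof (rule endo_inj_surj)
  show "finite sigma2_steps"
    by (simp add: sigma2_steps_def)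
  have "\<forall>g\<in>symmetry_generators. g ` sigma2_steps \<subseteq> sigma2_steps"
    unfolding symmetry_generators_def sigma2_steps_def sigma2_step_list_def by simp
  then show "g ` sigma2_steps \<subseteq> sigma2_steps"
    using assms by blast
  show "inj_on g sigma2_steps"
    using inj_symmetry_generator[OF assms] by (rule inj_on_subset) simp
qed

lemma walk_count_sigma2_symmetry:
  "g \<in> symmetry_generators \<Longrightarrow> walk_count sigma2_steps k (g u) = walk_count sigma2_steps k u"
  by (rule walk_count_automorphism[OF symmetry_generator_diff inj_symmetry_generator
        symmetry_generator_sigma2_steps])

fun abs_coords :: "vec4 \<Rightarrow> vec4" where
  "abs_coords (a, b, c, d) = (\<bar>a\<bar>, \<bar>b\<bar>, \<bar>c\<bar>, \<bar>d\<bar>)"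

fun exchange_01_23 :: "vec4 \<Rightarrow> vec4" where
  "exchange_01_23 (a, b, c, d) = (min a b, max a b, min c d, max c d)"

fun exchange_02_13 :: "vec4 \<Rightarrow> vec4" where
  "exchange_02_13 (a, b, c, d) = (min a c, min b d, max a c, max b d)"

fun exchange_12 :: "vec4 \<Rightarrow> vec4" where
  "exchange_12 (a, b, c, d) = (a, min b c, max b c, d)"

text \<open>The three layers of exchanges form a sorting network for four inputs.\<close>
definition canon :: "vec4 \<Rightarrow> vec4" where
  "canon = exchange_12 \<circ> exchange_02_13 \<circ> exchange_01_23 \<circ> abs_coords"

lemma canon_invariant:
  assumes "\<And>g u. g \<in> symmetry_generators \<Longrightarrow> f (g u) = f u"
  shows "f (canon u) = f u"
proof -
  have "\<forall>g\<in>symmetry_generators. f (g (a, b, c, d)) = f (a, b, c, d)" for a b c d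
    using assms by blast
  then have swap: "f (b, a, c, d) = f (a, b, c, d)" "f (a, b, d, c) = f (a, b, c, d)"
      "f (c, b, a, d) = f (a, b, c, d)" "f (a, d, c, b) = f (a, b, c, d)" "f (a, c, b, d) = f (a, b, c, d)"
    and negate: "f (- a, b, c, d) = f (a, b, c, d)" "f (a, - b, c, d) = f (a, b, c, d)"
      "f (a, b, - c, d) = f (a, b, c, d)" "f (a, b, c, - d) = f (a, b, c, d)" for a b c d
    by (simp_all add: symmetry_generators_def)
  have "f (abs_coords u) = f u" for u
    using negate by (cases u) (simp add: abs_if)
  moreover have "f (exchange_01_23 u) = f u" "f (exchange_02_13 u) = f u" "f (exchange_12 u) = f u" for u
    using swap by (cases u; simp add: min_def max_def)+
  ultimately show ?thesis
    by (simp add: canon_def)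
qed

lemma canon_sorted:
  assumes "canon u = (a, b, c, d)"
  shows "0 \<le> a \<and> a \<le> b \<and> b \<le> c \<and> c \<le> d \<and> a + b + c + d = norm1 u"
proof -
  obtain x y z w where u: "u = (x, y, z, w)"
    by (cases u)
  define p q r s where "p = min \<bar>x\<bar> \<bar>y\<bar>" and "q = max \<bar>x\<bar> \<bar>y\<bar>" and "r = min \<bar>z\<bar> \<bar>w\<bar>" and "s = max \<bar>z\<bar> \<bar>w\<bar>"
  have "canon u = (min p r, min (min q s) (max p r), max (min q s) (max p r), max q s)"
    by (simp add: canon_def u p_def q_def r_def s_def)
  moreover have "0 \<le> p" "p \<le> q" "0 \<le> r" "r \<le> s" "p + q + r + s = norm1 u"
    by (auto simp: u p_def q_def r_def s_def min_def max_def)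
  ultimately show ?thesis
    using assms by (auto simp: min_def max_def)
qed

lemma even_norm1_iff: "even (norm1 u) \<longleftrightarrow> even (coord_sum u)"
  by (cases u) simp

lemma map_of_entries:
  assumes "xs = ys" and "distinct (map fst xs)"
  shows "list_all (\<lambda>(k, v). map_of xs k = Some v) ys"
  using assms by (auto simp: list_all_iff)

text \<open>Row \<open>(c, ws)\<close> lists \<open>walk_count sigma2_steps k c\<close> for \<open>k = 0, \<dots>, 6\<close>, for every canonical
  point \<open>c\<close> with \<open>norm1 c \<le> 12\<close> and even coordinate sum.\<close>
definition walk_table :: "(vec4 \<times> int list) list" where
  "walk_table =
    [((0, 0, 0, 0), [1, 0, 24, 192, 3384, 51840, 911040]),
     ((0, 0, 0, 2), [0, 0, 6, 72, 1512, 26640, 514260]),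
     ((0, 0, 0, 4), [0, 0, 0, 0, 90, 2880, 81720]),
     ((0, 0, 0, 6), [0, 0, 0, 0, 0, 0, 1860]),
     ((0, 0, 0, 8), [0, 0, 0, 0, 0, 0, 0]),
     ((0, 0, 0, 10), [0, 0, 0, 0, 0, 0, 0]),
     ((0, 0, 0, 12), [0, 0, 0, 0, 0, 0, 0]),
     ((0, 0, 1, 1), [0, 1, 8, 141, 2160, 37960, 682080]),
     ((0, 0, 1, 3), [0, 0, 0, 15, 384, 9390, 209280]),
     ((0, 0, 1, 5), [0, 0, 0, 0, 0, 310, 14400]),
     ((0, 0, 1, 7), [0, 0, 0, 0, 0, 0, 0]),
     ((0, 0, 1, 9), [0, 0, 0, 0, 0, 0, 0]),
     ((0, 0, 1, 11), [0, 0, 0, 0, 0, 0, 0]),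
     ((0, 0, 2, 2), [0, 0, 1, 24, 640, 13280, 285045]),
     ((0, 0, 2, 4), [0, 0, 0, 0, 28, 1280, 42390]),
     ((0, 0, 2, 6), [0, 0, 0, 0, 0, 0, 795]),
     ((0, 0, 2, 8), [0, 0, 0, 0, 0, 0, 0]),
     ((0, 0, 2, 10), [0, 0, 0, 0, 0, 0, 0]),
     ((0, 0, 3, 3), [0, 0, 0, 1, 48, 2025, 59000]),
     ((0, 0, 3, 5), [0, 0, 0, 0, 0, 45, 3240]),
     ((0, 0, 3, 7), [0, 0, 0, 0, 0, 0, 0]),
     ((0, 0, 3, 9), [0, 0, 0, 0, 0, 0, 0]),
     ((0, 0, 4, 4), [0, 0, 0, 0, 1, 80, 5016]),
     ((0, 0, 4, 6), [0, 0, 0, 0, 0, 0, 66]),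
     ((0, 0, 4, 8), [0, 0, 0, 0, 0, 0, 0]),
     ((0, 0, 5, 5), [0, 0, 0, 0, 0, 1, 120]),
     ((0, 0, 5, 7), [0, 0, 0, 0, 0, 0, 0]),
     ((0, 0, 6, 6), [0, 0, 0, 0, 0, 0, 1]),
     ((0, 1, 1, 2), [0, 0, 2, 48, 948, 19180, 381720]),
     ((0, 1, 1, 4), [0, 0, 0, 0, 48, 1960, 58680]),
     ((0, 1, 1, 6), [0, 0, 0, 0, 0, 0, 1200]),
     ((0, 1, 1, 8), [0, 0, 0, 0, 0, 0, 0]),
     ((0, 1, 1, 10), [0, 0, 0, 0, 0, 0, 0]),
     ((0, 1, 2, 3), [0, 0, 0, 3, 148, 4410, 112470]),
     ((0, 1, 2, 5), [0, 0, 0, 0, 0, 110, 6930]),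
     ((0, 1, 2, 7), [0, 0, 0, 0, 0, 0, 0]),
     ((0, 1, 2, 9), [0, 0, 0, 0, 0, 0, 0]),
     ((0, 1, 3, 4), [0, 0, 0, 0, 4, 335, 14940]),
     ((0, 1, 3, 6), [0, 0, 0, 0, 0, 0, 210]),
     ((0, 1, 3, 8), [0, 0, 0, 0, 0, 0, 0]),
     ((0, 1, 4, 5), [0, 0, 0, 0, 0, 5, 636]),
     ((0, 1, 4, 7), [0, 0, 0, 0, 0, 0, 0]),
     ((0, 1, 5, 6), [0, 0, 0, 0, 0, 0, 6]),
     ((0, 2, 2, 2), [0, 0, 0, 6, 252, 6360, 154620]),
     ((0, 2, 2, 4), [0, 0, 0, 0, 6, 520, 21180]),
     ((0, 2, 2, 6), [0, 0, 0, 0, 0, 0, 300]),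
     ((0, 2, 2, 8), [0, 0, 0, 0, 0, 0, 0]),
     ((0, 2, 3, 3), [0, 0, 0, 0, 12, 840, 29850]),
     ((0, 2, 3, 5), [0, 0, 0, 0, 0, 10, 1350]),
     ((0, 2, 3, 7), [0, 0, 0, 0, 0, 0, 0]),
     ((0, 2, 4, 4), [0, 0, 0, 0, 0, 20, 2130]),
     ((0, 2, 4, 6), [0, 0, 0, 0, 0, 0, 15]),
     ((0, 2, 5, 5), [0, 0, 0, 0, 0, 0, 30]),
     ((0, 3, 3, 4), [0, 0, 0, 0, 0, 30, 3120]),
     ((0, 3, 3, 6), [0, 0, 0, 0, 0, 0, 20]),
     ((0, 3, 4, 5), [0, 0, 0, 0, 0, 0, 60]),
     ((0, 4, 4, 4), [0, 0, 0, 0, 0, 0, 90]),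
     ((1, 1, 1, 1), [0, 0, 6, 72, 1512, 26640, 514260]),
     ((1, 1, 1, 3), [0, 0, 0, 6, 252, 6360, 154620]),
     ((1, 1, 1, 5), [0, 0, 0, 0, 0, 180, 10080]),
     ((1, 1, 1, 7), [0, 0, 0, 0, 0, 0, 0]),
     ((1, 1, 1, 9), [0, 0, 0, 0, 0, 0, 0]),
     ((1, 1, 2, 2), [0, 0, 0, 15, 384, 9390, 209280]),
     ((1, 1, 2, 4), [0, 0, 0, 0, 12, 840, 29850]),
     ((1, 1, 2, 6), [0, 0, 0, 0, 0, 0, 480]),
     ((1, 1, 2, 8), [0, 0, 0, 0, 0, 0, 0]),
     ((1, 1, 3, 3), [0, 0, 0, 0, 28, 1280, 42390]),
     ((1, 1, 3, 5), [0, 0, 0, 0, 0, 20, 2130]),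
     ((1, 1, 3, 7), [0, 0, 0, 0, 0, 0, 0]),
     ((1, 1, 4, 4), [0, 0, 0, 0, 0, 45, 3240]),
     ((1, 1, 4, 6), [0, 0, 0, 0, 0, 0, 30]),
     ((1, 1, 5, 5), [0, 0, 0, 0, 0, 0, 66]),
     ((1, 2, 2, 3), [0, 0, 0, 0, 48, 1960, 58680]),
     ((1, 2, 2, 5), [0, 0, 0, 0, 0, 30, 3120]),
     ((1, 2, 2, 7), [0, 0, 0, 0, 0, 0, 0]),
     ((1, 2, 3, 4), [0, 0, 0, 0, 0, 110, 6930]),
     ((1, 2, 3, 6), [0, 0, 0, 0, 0, 0, 60]),
     ((1, 2, 4, 5), [0, 0, 0, 0, 0, 0, 210]),
     ((1, 3, 3, 3), [0, 0, 0, 0, 0, 180, 10080]),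
     ((1, 3, 3, 5), [0, 0, 0, 0, 0, 0, 300]),
     ((1, 3, 4, 4), [0, 0, 0, 0, 0, 0, 480]),
     ((2, 2, 2, 2), [0, 0, 0, 0, 90, 2880, 81720]),
     ((2, 2, 2, 4), [0, 0, 0, 0, 0, 180, 10080]),
     ((2, 2, 2, 6), [0, 0, 0, 0, 0, 0, 90]),
     ((2, 2, 3, 3), [0, 0, 0, 0, 0, 310, 14400]),
     ((2, 2, 3, 5), [0, 0, 0, 0, 0, 0, 480]),
     ((2, 2, 4, 4), [0, 0, 0, 0, 0, 0, 795]),
     ((2, 3, 3, 4), [0, 0, 0, 0, 0, 0, 1200]),
     ((3, 3, 3, 3), [0, 0, 0, 0, 0, 0, 1860])]"

lemma distinct_walk_table_keys: "distinct (map fst walk_table)"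
  by (simp add: walk_table_def)

lemmas walk_table_lookups =
  map_of_entries[OF walk_table_def distinct_walk_table_keys, unfolded list.pred_inject split_conv]

lemma walk_table_keys:
  "map fst walk_table = [(a, b, c, d). a \<leftarrow> [0..3], b \<leftarrow> [a..4], c \<leftarrow> [b..6], d \<leftarrow> [c..12],
     a + b + c + d \<le> 12 \<and> even (a + b + c + d)]"
  unfolding walk_table_def by code_simp

lemma canon_in_walk_table:
  assumes "norm1 v \<le> 12" and "even (coord_sum v)"
  shows "canon v \<in> fst ` set walk_table"
proof -
  obtain a b c d where canon: "canon v = (a, b, c, d)"
    by (cases "canon v")
  with canon_sorted[OF canon] assms even_norm1_iff[of v]
  have "a \<in> {0..3}" "b \<in> {a..4}" "c \<in> {b..6}" "d \<in> {c..12}" "a + b + c + d \<le> 12" "even (a + b + c + d)"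
    by auto
  then show ?thesis
    unfolding canon image_set walk_table_keys by auto
qed

lemma walk_table_key_even: "(a, b, c, d) \<in> fst ` set walk_table \<Longrightarrow> even (a + b + c + d)"
  unfolding image_set walk_table_keys by auto

definition walk_value :: "nat \<Rightarrow> vec4 \<Rightarrow> int" where
  "walk_value k v =
     (if norm1 v \<le> 12 then (case map_of walk_table (canon v) of None \<Rightarrow> 0 | Some ws \<Rightarrow> ws ! k) else 0)"

lemma walk_value_of_rows:
  assumes rows: "\<And>c ws. (c, ws) \<in> set walk_table \<Longrightarrow> walk_count sigma2_steps k c = ws ! k" and "k \<le> 6"
  shows "walk_count sigma2_steps k v = walk_value k v"
proof (cases "norm1 v \<le> 12 \<and> even (coord_sum v)")
  case True
  then have "map_of walk_table (canon v) \<noteq> None"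
    using canon_in_walk_table by (simp add: map_of_eq_None_iff)
  then obtain ws where ws: "map_of walk_table (canon v) = Some ws"
    by blast
  have "walk_count sigma2_steps k v = walk_count sigma2_steps k (canon v)"
    by (rule canon_invariant[symmetric]) (rule walk_count_sigma2_symmetry)
  also have "\<dots> = ws ! k"
    using rows map_of_SomeD[OF ws] by blast
  also have "\<dots> = walk_value k v"
    using True ws unfolding walk_value_def by (simp only: if_True option.case)
  finally show ?thesis .
next
  case False
  then have "walk_count sigma2_steps k v = 0"
    using walk_count_sigma2_support[of k v] \<open>k \<le> 6\<close> by linarith
  moreover have "walk_value k v = 0"
  proof (cases "norm1 v \<le> 12")
    case True
    obtain a b c d where canon: "canon v = (a, b, c, d)"
      by (cases "canon v")
    with False True canon_sorted[OF canon] even_norm1_iff[of v]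
    have "odd (a + b + c + d)"
      by simp
    then have "canon v \<notin> fst ` set walk_table"
      using walk_table_key_even unfolding canon by blast
    then have "map_of walk_table (canon v) = None"
      by (rule map_of_eq_None_iff[THEN iffD2])
    with True show ?thesis
      by (simp add: walk_value_def)
  qed (simp add: walk_value_def)
  ultimately show ?thesis by simp
qed

lemma walk_table_initial: "list_all (\<lambda>(c, ws). ws ! 0 = (if c = 0 then 1 else 0)) walk_table"
  unfolding walk_table_def list.pred_inject split_conv by (simp add: zero_prod_def)

lemma walk_table_step:
  assumes "k < 6"
  shows "list_all (\<lambda>(c, ws). (\<Sum>s\<in>sigma2_steps. walk_value k (c - s)) = ws ! Suc k) walk_table"
proof -
  from assms have "k = 0 \<or> k = 1 \<or> k = 2 \<or> k = 3 \<or> k = 4 \<or> k = 5"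
    by auto
  then show ?thesis
    unfolding walk_table_def list.pred_inject split_conv
    by (elim disjE; intro conjI TrueI; simp add: walk_value_def walk_table_lookups sum_sigma2_steps
        sigma2_step_list_def canon_def zero_prod_def)
qed

lemma walk_table_rows:
  "k \<le> 6 \<Longrightarrow> (c, ws) \<in> set walk_table \<Longrightarrow> walk_count sigma2_steps k c = ws ! k"
proof (induction k arbitrary: c ws)
  case 0
  then show ?case
    using walk_table_initial by (auto simp: list_all_iff)
next
  case (Suc k)
  have "walk_count sigma2_steps (Suc k) c = (\<Sum>s\<in>sigma2_steps. walk_value k (c - s))"
    using walk_value_of_rows[OF Suc.IH] Suc.prems by simp
  also have "\<dots> = ws ! Suc k"
    using walk_table_step[of k] Suc.prems by (auto simp: list_all_iff)
  finally show ?case .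
qed

lemma walk_count_eq_walk_value: "k \<le> 6 \<Longrightarrow> walk_count sigma2_steps k v = walk_value k v"
  by (rule walk_value_of_rows[OF walk_table_rows])

definition sort3 :: "int \<Rightarrow> int \<Rightarrow> int \<Rightarrow> int \<times> int \<times> int" where
  "sort3 a b c = (min a (min b c), a + b + c - min a (min b c) - max a (max b c), max a (max b c))"

lemma sort3_swap12: "sort3 a b c = sort3 b a c"
  unfolding sort3_def by (simp add: min.left_commute max.left_commute algebra_simps)

lemma sort3_swap23: "sort3 a b c = sort3 a c b"
  unfolding sort3_def by (simp add: min.commute max.commute algebra_simps)

lemma sort3_sum: "fst (sort3 a b c) + fst (snd (sort3 a b c)) + snd (snd (sort3 a b c)) = a + b + c"
  by (simp add: sort3_def)

text \<open>Entry \<open>((x, b, c, e), q)\<close>: the certificate coefficient \<open>Q\<^sub>i(t)\<close>, as a polynomial in \<open>n\<close>, at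
  points \<open>t\<close> with \<open>t\<^sub>i = x > 0\<close> and the other three coordinates equal to \<open>b \<le> c \<le> e\<close> up to
  order and sign; it is odd in \<open>t\<^sub>i\<close> and even in the others.\<close>
definition certificate_table :: "((int \<times> int \<times> int \<times> int) \<times> int poly) list" where
  "certificate_table =
    [((1, 0, 0, 1), [:11626721472, 14249748640, 6989026304, 1713139488, 209582240, 10222240:]),
     ((1, 0, 0, 3), [:7660429680, 9016837400, 6004909168, 1880817988, 314917884, 18958936:]),
     ((1, 0, 0, 5), [:302981760, 199971200, 216644160, 65883712, 10267408, 860880:]),
     ((1, 0, 0, 7), 0),
     ((1, 0, 0, 9), 0),
     ((1, 0, 1, 2), [:7343933384, 7114407560, 2605653126, 186541108, -78376524, -22908610:]),
     ((1, 0, 1, 4), [:2827483392, 4233633868, 2479139606, 881220582, 181251638, 18356502:]),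
     ((1, 0, 1, 6), [:0, 46678048, -5086468, -4528884, -1436552, -204680:]),
     ((1, 0, 1, 8), 0),
     ((1, 0, 2, 3), [:3580658464, 3841973312, 1887458660, 519008293, 88413331, 8788256:]),
     ((1, 0, 2, 5), [:345213648, 139215616, 47208372, 9691232, 1015648, 37660:]),
     ((1, 0, 2, 7), 0),
     ((1, 0, 3, 4), [:295162684, 1104864386, 613186592, 125343648, 780092, -2658002:]),
     ((1, 0, 3, 6), [:-140034144, -31418644, 18673120, 8838540, 2050592, 204680:]),
     ((1, 0, 4, 5), [:104088480, 32219608, 3324928, 669012, 66920, 2660:]),
     ((1, 1, 1, 1), [:7769226240, 6652905168, 2465266176, -78740868, -130323546, -39510036:]),
     ((1, 1, 1, 3), [:5392286976, 6703369024, 3312678832, 1025712268, 180710374, 20106306:]),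
     ((1, 1, 1, 5), [:165600000, 262176240, 113720944, 31828168, 4963440, 297640:]),
     ((1, 1, 1, 7), 0),
     ((1, 1, 2, 2), [:4721909696, 4452453440, 2030851144, 376471900, 36065656, -159600:]),
     ((1, 1, 2, 4), [:774629640, 930365388, 377300864, 49295976, -4749368, -203980:]),
     ((1, 1, 2, 6), [:-93356096, 10172936, 9057768, 2873104, 409360:]),
     ((1, 1, 3, 3), [:1837965312, 2779181488, 1404768216, 299824872, 14542152, -4062024:]),
     ((1, 1, 3, 5), [:27600000, 13231880, 21435528, 6658716, 1166920, 96180:]),
     ((1, 1, 4, 4), [:62100000, 80904000, 43735900, 12562580, 2022852, 148540:]),
     ((1, 2, 2, 3), [:1623617280, 1440361488, 552825104, 122475232, 18729440, 1428000:]),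
     ((1, 2, 2, 5), [:123449632, 20243024, 1499088, -1093328, -274400, 8400:]),
     ((1, 2, 3, 4), [:93298824, 135312264, 51393484, 9110524, 607604, -18620:]),
     ((1, 3, 3, 3), [:697149504, 281833248, 44374524, 7028322, -544740, 71190:]),
     ((2, 0, 0, 0), [:15538452480, 30881923584, 20635991424, 8932124400, 1963373520, 273738624:]),
     ((2, 0, 0, 2), [:6557859072, 8300836816, 3740010648, 530092952, -98153248, -35875688:]),
     ((2, 0, 0, 4), [:1180571200, 5165473952, 4187808752, 1494404456, 268839932, 9301712:]),
     ((2, 0, 0, 6), [:0, -186712192, 20345872, 18115536, 5746208, 818720:]),
     ((2, 0, 0, 8), 0),
     ((2, 0, 1, 1), [:7854542776, 11012447524, 5618422020, 1597496006, 235291322, 26758232:]),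
     ((2, 0, 1, 3), [:4655365336, 6178277988, 3434094694, 986289411, 139246277, 6297974:]),
     ((2, 0, 1, 5), [:-20806824, 121227684, 49399236, 1606060, -3938852, -664560:]),
     ((2, 0, 1, 7), 0),
     ((2, 0, 2, 2), [:2696143488, 2258290592, 342742408, -200825556, -55971086, -8068588:]),
     ((2, 0, 2, 4), [:366467712, 307418348, -53209338, -36257894, -731550, 3402082:]),
     ((2, 0, 2, 6), [:0, 46678048, -5086468, -4528884, -1436552, -204680:]),
     ((2, 0, 3, 3), [:1088881416, 2336650108, 1180924560, 247354368, 2460744, -5137644:]),
     ((2, 0, 3, 5), [:-58352184, -22324188, 22154676, 9519420, 2118772, 207480:]),
     ((2, 0, 4, 4), [:219712320, 75756560, 11052032, 2183652, 213640, 8260:]),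
     ((2, 1, 1, 2), [:2943307040, 2616758448, 862809872, -27050590, -49250622, -15140192:]),
     ((2, 1, 1, 4), [:415241208, 261724252, 280325788, 106374580, 25202828, 2188160:]),
     ((2, 1, 1, 6), [:93356096, -10172936, -9057768, -2873104, -409360:]),
     ((2, 1, 2, 3), [:941184648, 882995736, 211114090, 11127690, 4736474, 3150522:]),
     ((2, 1, 2, 5), [:-10162408, 37814884, 4158504, -397924, -410500, -79380:]),
     ((2, 1, 3, 4), [:107125440, 120049640, 38150656, 5811836, -5032, -86100:]),
     ((2, 2, 2, 2), [:1051107840, 574422552, 123157020, 12259992, -13237020, -3045840:]),
     ((2, 2, 2, 4), [:82800000, 10062656, 30293064, 5698592, 1638832, 121240:]),
     ((2, 2, 3, 3), [:207270960, 175984520, 63706240, 11881680, 1128400, 43400:]),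
     ((3, 0, 0, 1), [:4518872624, 10104813160, 7276300488, 3168427276, 738243268, 95911584:]),
     ((3, 0, 0, 3), [:898369056, 1643057488, 1438479900, 396433668, 25894532, -12790068:]),
     ((3, 0, 0, 5), [:24961440, -85769184, -4647012, -3090412, -1878972, -57940:]),
     ((3, 0, 0, 7), 0),
     ((3, 0, 1, 2), [:-431899632, -819684152, -1088486532, -600849761, -167708679, -19565356:]),
     ((3, 0, 1, 4), [:-140543668, 23196782, 82456246, 39339018, 10958222, 1101640:]),
     ((3, 0, 1, 6), [:46678048, -5086468, -4528884, -1436552, -204680:]),
     ((3, 0, 2, 3), [:33663144, -301556888, -301845706, -76685542, -1599914, 2026202:]),
     ((3, 0, 2, 5), [:48101456, 15241488, -12972092, -7135360, -1814272, -203140:]),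
     ((3, 0, 3, 4), [:13782720, 13445760, 5305080, 1053240, 105000, 4200:]),
     ((3, 1, 1, 1), [:0, 0, 0, 0, 0, 9432450:]),
     ((3, 1, 1, 3), [:0, 0, 0, 0, 0, -1903120:]),
     ((3, 1, 1, 5), [:0, 0, 0, 0, 0, 8400:]),
     ((3, 1, 2, 2), [:88870304:]),
     ((3, 1, 2, 4), [:-1316568:]),
     ((3, 1, 3, 3), [:-22261056, 18219328, 19426316, 7617174, 1144212, 144970:]),
     ((3, 2, 2, 3), [:4419360:]),
     ((4, 0, 0, 0), [:2102215680, 5119904160, 5931849840, 2777857848, 815330280, 98964840:]),
     ((4, 0, 0, 2), [:328697056, -1439032224, -1333345512, -610428400, -161501700, -15393600:]),
     ((4, 0, 0, 4), [:28238976, 133737600, 18586896, 4353940, 492520, 21700:]),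
     ((4, 0, 0, 6), 0),
     ((4, 0, 1, 1), [:0, 0, 0, 0, 0, 1691480:]),
     ((4, 0, 1, 3), [:267878888, 30490944:]),
     ((4, 0, 1, 5), [:-22572120, 2167128, 1150136, 284268, 33600, 1540:]),
     ((4, 0, 2, 2), 0),
     ((4, 0, 2, 4), [:-48028080, -24003240:]),
     ((4, 0, 3, 3), [:25920:]),
     ((4, 1, 1, 2), 0),
     ((4, 1, 1, 4), [:0, 0, 0, 0, 0, 6160:]),
     ((4, 1, 2, 3), 0),
     ((4, 2, 2, 2), 0),
     ((5, 0, 0, 1), [:110523648, 184850944, 122465632, 40200736, 6264640, 128960:]),
     ((5, 0, 0, 3), [:9863136, 30043968, 33802084, 19566812, 6474700, 905780:]),
     ((5, 0, 0, 5), [:276000, 305600, 134620, 29508, 3220, 140:]),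
     ((5, 0, 1, 2), [:0, 0, 0, 0, 0, -190400:]),
     ((5, 0, 1, 4), 0),
     ((5, 0, 2, 3), 0),
     ((5, 1, 1, 1), [:0, 0, 0, 0, 0, 67200:]),
     ((5, 1, 1, 3), 0),
     ((5, 1, 2, 2), 0),
     ((6, 0, 0, 0), 0),
     ((6, 0, 0, 2), 0),
     ((6, 0, 0, 4), 0),
     ((6, 0, 1, 1), 0),
     ((6, 0, 1, 3), 0),
     ((6, 0, 2, 2), 0),
     ((6, 1, 1, 2), 0),
     ((7, 0, 0, 1), 0),
     ((7, 0, 0, 3), 0),
     ((7, 0, 1, 2), 0),
     ((7, 1, 1, 1), 0),
     ((8, 0, 0, 0), 0),
     ((8, 0, 0, 2), 0),
     ((8, 0, 1, 1), 0),
     ((9, 0, 0, 1), 0),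
     ((10, 0, 0, 0), 0)]"

lemma distinct_certificate_table_keys: "distinct (map fst certificate_table)"
  by (simp add: certificate_table_def)

lemmas certificate_table_lookups =
  map_of_entries[OF certificate_table_def distinct_certificate_table_keys,
    unfolded list.pred_inject split_conv]

lemma certificate_table_keys_even: "list_all (\<lambda>((x, b, c, e), q). even (x + b + c + e)) certificate_table"
  unfolding certificate_table_def list.pred_inject split_conv by simp

definition certificate_entry :: "int \<Rightarrow> int \<Rightarrow> int \<Rightarrow> int \<Rightarrow> int poly" where
  "certificate_entry x y z w =
     (if \<bar>x\<bar> + \<bar>y\<bar> + \<bar>z\<bar> + \<bar>w\<bar> \<le> 10
      then smult (sgn x) (case map_of certificate_table (\<bar>x\<bar>, sort3 \<bar>y\<bar> \<bar>z\<bar> \<bar>w\<bar>) of None \<Rightarrow> 0 | Some q \<Rightarrow> q)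
      else 0)"

lemma certificate_entry_uminus: "certificate_entry (- x) y z w = - certificate_entry x y z w"
  by (simp add: certificate_entry_def sgn_minus)

lemma certificate_entry_even:
  "certificate_entry x (- y) z w = certificate_entry x y z w"
  "certificate_entry x y (- z) w = certificate_entry x y z w"
  "certificate_entry x y z (- w) = certificate_entry x y z w"
  by (simp_all add: certificate_entry_def)

lemma certificate_entry_swap:
  "certificate_entry x y z w = certificate_entry x z y w"
  "certificate_entry x y z w = certificate_entry x y w z"
   apply (simp add: certificate_entry_def sort3_swap12[of "\<bar>y\<bar>" "\<bar>z\<bar>"] add_ac)
  apply (simp add: certificate_entry_def sort3_swap23[of "\<bar>y\<bar>" "\<bar>z\<bar>"] add_ac)
  done

lemma certificate_entry_support:
  assumes "certificate_entry x y z w \<noteq> 0"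
  shows "\<bar>x\<bar> + \<bar>y\<bar> + \<bar>z\<bar> + \<bar>w\<bar> \<le> 10 \<and> even (x + y + z + w)"
proof -
  obtain q where lookup: "map_of certificate_table (\<bar>x\<bar>, sort3 \<bar>y\<bar> \<bar>z\<bar> \<bar>w\<bar>) = Some q"
    and bound: "\<bar>x\<bar> + \<bar>y\<bar> + \<bar>z\<bar> + \<bar>w\<bar> \<le> 10"
    using assms by (auto simp: certificate_entry_def split: if_splits option.splits)
  obtain b c e where sorted: "sort3 \<bar>y\<bar> \<bar>z\<bar> \<bar>w\<bar> = (b, c, e)"
    by (cases "sort3 \<bar>y\<bar> \<bar>z\<bar> \<bar>w\<bar>")
  have "even (\<bar>x\<bar> + b + c + e)"
    using certificate_table_keys_even map_of_SomeD[OF lookup] unfolding sorted list_all_iff by fastforce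
  moreover have "b + c + e = \<bar>y\<bar> + \<bar>z\<bar> + \<bar>w\<bar>"
    using sort3_sum[of "\<bar>y\<bar>" "\<bar>z\<bar>" "\<bar>w\<bar>"] sorted by simp
  ultimately have "even (\<bar>x\<bar> + \<bar>y\<bar> + \<bar>z\<bar> + \<bar>w\<bar>)"
    by (metis add.assoc)
  then show ?thesis
    using bound even_norm1_iff[of "(x, y, z, w)"] unfolding norm1.simps coord_sum.simps by blast
qed

fun certificate_component :: "nat \<Rightarrow> vec4 \<Rightarrow> int poly" where
  "certificate_component i (a, b, c, d) =
     (if i = 0 then certificate_entry a b c d else if i = 1 then certificate_entry b a c d
      else if i = 2 then certificate_entry c a b d else certificate_entry d a b c)"

lemma certificate_component_support:
  "certificate_component i t \<noteq> 0 \<Longrightarrow> norm1 t \<le> 10 \<and> even (coord_sum t)"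
  by (cases t) (auto split: if_splits dest!: certificate_entry_support simp: algebra_simps)

definition certificate_step :: "vec4 \<Rightarrow> vec4 \<Rightarrow> int poly" where
  "certificate_step s t = (\<Sum>i<4. [:coord i t, coord i s:] * certificate_component i t)"

definition certificate_poly :: "vec4 \<Rightarrow> int poly" where
  "certificate_poly u = (\<Sum>s\<in>sigma2_steps. certificate_step s (u - s))"

lemma sum_lessThan_four: "(\<Sum>i<4::nat. f i) = f 0 + f 1 + f 2 + f 3"
  by (simp add: eval_nat_numeral)

lemma sum_atMost_five: "(\<Sum>j\<le>5::nat. f j) = f 0 + f 1 + f 2 + f 3 + f 4 + f 5"
  by (simp add: eval_nat_numeral)

lemma poly_certificate_poly:
  "poly (certificate_poly u) n
     = euler_certificate sigma2_steps coord {..<4} (\<lambda>i t. poly (certificate_component i t) n) n u"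
  by (simp add: certificate_poly_def certificate_step_def euler_certificate_def poly_sum algebra_simps)

lemma certificate_step_symmetry:
  assumes "g \<in> symmetry_generators"
  shows "certificate_step (g s) (g t) = certificate_step s t"
  using assms by (cases s; cases t)
    (auto simp: symmetry_generators_def certificate_step_def sum_lessThan_four certificate_entry_uminus
      certificate_entry_even certificate_entry_swap algebra_simps)

lemma certificate_poly_symmetry:
  assumes "g \<in> symmetry_generators"
  shows "certificate_poly (g u) = certificate_poly u"
proof -
  have "certificate_poly (g u) = (\<Sum>s\<in>g ` sigma2_steps. certificate_step s (g u - s))"
    using symmetry_generator_sigma2_steps[OF assms] by (simp add: certificate_poly_def)
  also have "\<dots> = (\<Sum>s\<in>sigma2_steps. certificate_step (g s) (g (u - s)))"
    using inj_symmetry_generator[OF assms]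
    by (simp add: sum.reindex inj_on_subset symmetry_generator_diff[OF assms])
  finally show ?thesis
    by (simp add: certificate_poly_def certificate_step_symmetry[OF assms])
qed

definition recurrence_coeff :: "nat \<Rightarrow> int poly" where
  "recurrence_coeff j =
    [[:-2301198336, -6298435584, -6671130624, -3531423744, -989134848, -139345920, -7741440:],
     [:-5666070528, -11339661312, -9296308224, -3989716992, -943128576, -116121600, -5806080:],
     [:-3033262080, -5144802048, -3620313216, -1351180800, -281675520, -31046400, -1411200:],
     [:-444152448, -672706368, -423976960, -142288320, -26809600, -2688000, -112000:],
     [:5111808, 7238912, 4266304, 1337248, 234728, 21840, 840:],
     [:2760000, 3608000, 1957400, 564320, 91216, 7840, 280:]] ! j"

lemma degree_recurrence_coeff: "j \<le> 5 \<Longrightarrow> degree (recurrence_coeff j) = 6"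
  by (auto simp: recurrence_coeff_def le_Suc_eq numeral_eq_Suc)

lemma certificate_table_check:
  "list_all (\<lambda>(c, ws). (\<Sum>j\<le>5. smult (ws ! Suc j) (recurrence_coeff j)) = certificate_poly c) walk_table"
  unfolding walk_table_def list.pred_inject split_conv
  by (intro conjI TrueI; simp add: recurrence_coeff_def certificate_poly_def certificate_step_def
      sum_sigma2_steps sigma2_step_list_def sum_lessThan_four sum_atMost_five certificate_entry_def
      certificate_table_lookups sort3_def zero_prod_def)

lemma recurrence_certificate_identity:
  "(\<Sum>j\<le>5. smult (walk_count sigma2_steps (Suc j) u) (recurrence_coeff j)) = certificate_poly u"
proof (cases "norm1 u \<le> 12 \<and> even (coord_sum u)")
  case True
  let ?L = "\<lambda>u. \<Sum>j\<le>5. smult (walk_count sigma2_steps (Suc j) u) (recurrence_coeff j)"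
  have "canon u \<in> fst ` set walk_table"
    using canon_in_walk_table True by blast
  then obtain ws where row: "(canon u, ws) \<in> set walk_table"
    by auto
  have "?L u = ?L (canon u)"
    by (rule canon_invariant[symmetric]) (simp add: walk_count_sigma2_symmetry del: walk_count.simps)
  also have "\<dots> = (\<Sum>j\<le>5. smult (ws ! Suc j) (recurrence_coeff j))"
    using walk_table_rows[OF _ row] by (simp del: walk_count.simps)
  also have "\<dots> = certificate_poly (canon u)"
    using certificate_table_check row by (auto simp: list_all_iff)
  also have "\<dots> = certificate_poly u"
    by (rule canon_invariant) (rule certificate_poly_symmetry)
  finally show ?thesis .
next
  case False
  have "(\<Sum>j\<le>5. smult (walk_count sigma2_steps (Suc j) u) (recurrence_coeff j)) = 0"
  proof (intro sum.neutral ballI)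
    fix j :: nat assume "j \<in> {..5}"
    with False have "\<not> (norm1 u \<le> 2 * int (Suc j) \<and> even (coord_sum u))"
      by auto
    then have "walk_count sigma2_steps (Suc j) u = 0"
      using walk_count_sigma2_support by blast
    then show "smult (walk_count sigma2_steps (Suc j) u) (recurrence_coeff j) = 0"
      by (simp del: walk_count.simps)
  qed
  moreover have "certificate_poly u = 0"
    unfolding certificate_poly_def certificate_step_def
  proof (intro sum.neutral ballI)
    fix s i assume "s \<in> sigma2_steps"
    have "certificate_component i (u - s) = 0"
    proof (rule ccontr)
      assume "certificate_component i (u - s) \<noteq> 0"
      then have "norm1 (u - s) \<le> 10 \<and> even (coord_sum (u - s))"
        by (rule certificate_component_support)
      with norm1_add_sigma2_step[OF \<open>s \<in> sigma2_steps\<close>, of "u - s"]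
        even_coord_sum_sigma2_step[OF \<open>s \<in> sigma2_steps\<close>] False
      show False
        by (auto simp: coord_sum_add[of "u - s" s, simplified])
    qed
    then show "[:coord i (u - s), coord i s:] * certificate_component i (u - s) = 0"
      by simp
  qed
  ultimately show ?thesis
    by simp
qed

lemma r24_recurrence: "(\<Sum>j\<le>5. poly (recurrence_coeff j) (int n) * int (r24 (n + j))) = 0"
proof (cases "n = 0")
  case True
  then show ?thesis
    by (simp add: r24_eq_walk_count walk_count_eq_walk_value walk_value_def walk_table_lookups canon_def
        zero_prod_def sum_atMost_five recurrence_coeff_def)
next
  case False
  show ?thesis
    unfolding r24_eq_walk_count
  proof (rule walk_recurrence_of_euler_certificate[where A = "box 12" and B = "box 10" and \<phi> = coord
        and I = "{..<4}" and Q = "\<lambda>i t. poly (certificate_component i t) (int n)"])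
    show "v \<in> box 12" if "j \<le> 5" and "walk_count sigma2_steps (Suc j) v \<noteq> 0" for j v
    proof -
      from walk_count_sigma2_support[OF that(2)] that(1) have "norm1 v \<le> 12"
        by simp
      then show ?thesis
        by (rule norm1_le_imp_in_box)
    qed
    show "t \<in> box 10" if "poly (certificate_component i t) (int n) \<noteq> 0" for i t
    proof -
      from that have "certificate_component i t \<noteq> 0"
        by auto
      then show ?thesis
        using certificate_component_support norm1_le_imp_in_box by blast
    qed
    show "(\<Sum>j\<le>5. poly (recurrence_coeff j) (int n) * walk_count sigma2_steps (Suc j) u)
        = euler_certificate sigma2_steps coord {..<4} (\<lambda>i t. poly (certificate_component i t) (int n)) (int n) u"
      for u
      using arg_cong[where f = "\<lambda>p. poly p (int n)", OF recurrence_certificate_identity[of u]]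
      by (simp add: poly_sum poly_certificate_poly mult.commute)
  qed (use False in \<open>auto simp: coord_diff finite_box box_add_sigma2_step\<close>)
qed

lemma poly_map_poly_of_int: "poly (map_poly of_int p) (of_int x) = (of_int (poly p x) :: 'a::comm_ring_1)"
  by (induction p) (auto simp: map_poly_pCons)

theorem theorem8:
  shows "(\<exists>h :: nat \<Rightarrow> int poly.
            (\<forall>j\<le>5. degree (h j) = 6) \<and>
            (\<forall>n. (\<Sum>j\<le>5. poly (h j) (int n) * int (r24 (n + j))) = 0))
       \<and> (\<exists>u :: nat \<Rightarrow> rat poly.
            u 11 \<noteq> 0 \<and>
            (\<forall>k\<le>11. degree (u k) \<le> 5) \<and> (\<exists>k\<le>11. degree (u k) = 5) \<and>
            (\<Sum>k\<le>11. fps_of_poly (u k) * (theta ^^ k) R24) = 0)"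
proof
  show "\<exists>h :: nat \<Rightarrow> int poly. (\<forall>j\<le>5. degree (h j) = 6) \<and>
      (\<forall>n. (\<Sum>j\<le>5. poly (h j) (int n) * int (r24 (n + j))) = 0)"
    using degree_recurrence_coeff r24_recurrence by blast
  define h where "h j = map_poly (of_int :: int \<Rightarrow> rat) (recurrence_coeff j)" for j
  have degree_h: "degree (h j) = 6" if "j \<le> 5" for j
    using that by (simp add: h_def degree_map_poly degree_recurrence_coeff)
  have recurrence: "(\<Sum>j\<le>5. poly (h j) (of_nat n) * of_nat (r24 (n + j))) = 0" for n
  proof -
    have "(\<Sum>j\<le>5. poly (h j) (of_nat n) * of_nat (r24 (n + j)))
        = (of_int (\<Sum>j\<le>5. poly (recurrence_coeff j) (int n) * int (r24 (n + j))) :: rat)"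
      using poly_map_poly_of_int[where 'a = rat and x = "int n"] by (simp add: h_def)
    then show ?thesis
      by (simp only: r24_recurrence of_int_0)
  qed
  have "h 0 \<noteq> 0"
    using degree_h[of 0] by auto
  then obtain u where degree_u: "\<And>k. degree (u k) \<le> 5" and "degree (u (5 + 6)) = 5" "u (5 + 6) \<noteq> 0"
    and "(\<Sum>k\<le>5 + 6. fps_of_poly (u k) * (theta ^^ k) (Abs_fps (\<lambda>n. of_nat (r24 n)))) = 0"
    using theta_equation_of_recurrence[of 5 h 6 "\<lambda>n. of_nat (r24 n)"] degree_h recurrence by auto
  then have "degree (u 11) = 5" "u 11 \<noteq> 0" "(\<Sum>k\<le>11. fps_of_poly (u k) * (theta ^^ k) R24) = 0"
    by (simp_all add: R24_def)
  with degree_u show "\<exists>u :: nat \<Rightarrow> rat poly. u 11 \<noteq> 0 \<and> (\<forall>k\<le>11. degree (u k) \<le> 5) \<and>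
      (\<exists>k\<le>11. degree (u k) = 5) \<and> (\<Sum>k\<le>11. fps_of_poly (u k) * (theta ^^ k) R24) = 0"
    by blast
qed

end
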